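(* Let $G$ be a graph, let $h\geq 1$ and $n$ be positive integers, let $\varepsilon\in(0,\frac19]$ and $\rho\in(0,\frac12]$. Suppose $V_1,\dots,V_h\subseteq V(G)$ is a $(\rho,\varepsilon,\geq n)$-rich inflation of $K_h$, and let $Y=\bigcup_{i=1}^hV_i$. Let $X\subseteq V(G)$ be disjoint from $Y$ with $|X|\geq n$ and $d_X(y)\geq p|X|$ for all $y\in Y$, where $p\geq(1-\varepsilon)\rho$. Then at least one of the following holds: (a) $(V_1,\dots,V_h,X)$ is a $(\rho,2\varepsilon,\geq n)$-rich inflation of $K_{h+1}$; or (b) there exist $X'\subseteq X$ and $Y'\subseteq Y$ with $|X'|\geq\varepsilon\rho^{h^2}|X|$ and $|Y'|\geq \varepsilon\rho^{h^2}n$ such that $d_{X'}(y)\geq(1+\varepsilon\rho^{2h})p|X'|$ for all $y\in Y'$.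
   Context: For a vertex $y$ and a vertex set $A$, $d_A(y)=|N(y)\cap A|$. For pairwise disjoint $V_1,\dots,V_h\subseteq V(G)$, a canonical copy of $K_h$ is a tuple $(v_1,\dots,v_h)$ with $v_i\in V_i$ and all pairs $v_iv_j$ ($i\neq j$) edges of $G$. The tuple $(V_1,\dots,V_h)$ of pairwise disjoint sets is a $(\rho,\varepsilon,\geq n)$-rich inflation of $K_h$ if $e(G[V_1])\geq\rho\binom{|V_1|}2$, the number of canonical copies of $K_h$ is at least $((1-\varepsilon)\rho)^{\binom h2}\prod_{i=1}^h|V_i|$, and $|V_i|\geq n$ for all $i$. *)

theory Defs
  imports Complex_Main "HOL-Library.FuncSet"
begin

definition graph :: "'a set \<Rightarrow> ('a \<Rightarrow> 'a \<Rightarrow> bool) \<Rightarrow> bool" where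
  "graph V E \<longleftrightarrow> finite V \<and> (\<forall>u v. E u v \<longrightarrow> E v u) \<and> (\<forall>v. \<not> E v v)
      \<and> (\<forall>u v. E u v \<longrightarrow> u \<in> V \<and> v \<in> V)"

definition deg_in :: "('a \<Rightarrow> 'a \<Rightarrow> bool) \<Rightarrow> 'a set \<Rightarrow> 'a \<Rightarrow> nat" where
  "deg_in E A y = card {x \<in> A. E y x}"

definition edges_in :: "('a \<Rightarrow> 'a \<Rightarrow> bool) \<Rightarrow> 'a set \<Rightarrow> nat" where
  "edges_in E A = card {{u, v} | u v. u \<in> A \<and> v \<in> A \<and> E u v}"

text \<open>Canonical copies of K_h for the sets Vs 0, ..., Vs (h-1) (the paper's V_1..V_h)\<close>
definition canonical_copies :: "('a \<Rightarrow> 'a \<Rightarrow> bool) \<Rightarrow> nat \<Rightarrow> (nat \<Rightarrow> 'a set) \<Rightarrow> (nat \<Rightarrow> 'a) set" where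
  "canonical_copies E h Vs =
     {f \<in> Pi\<^sub>E {..<h} Vs. \<forall>i<h. \<forall>j<h. i \<noteq> j \<longrightarrow> E (f i) (f j)}"

definition rich_inflation ::
  "'a set \<Rightarrow> ('a \<Rightarrow> 'a \<Rightarrow> bool) \<Rightarrow> nat \<Rightarrow> (nat \<Rightarrow> 'a set) \<Rightarrow> real \<Rightarrow> real \<Rightarrow> nat \<Rightarrow> bool" where
  "rich_inflation V E h Vs \<rho> \<epsilon> n \<longleftrightarrow>
     (\<forall>i<h. Vs i \<subseteq> V) \<and>
     (\<forall>i<h. \<forall>j<h. i \<noteq> j \<longrightarrow> Vs i \<inter> Vs j = {}) \<and>
     real (edges_in E (Vs 0)) \<ge> \<rho> * real (card (Vs 0) choose 2) \<and>
     real (card (canonical_copies E h Vs))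
        \<ge> ((1 - \<epsilon>) * \<rho>) ^ (h choose 2) * (\<Prod>i<h. real (card (Vs i))) \<and>
     (\<forall>i<h. card (Vs i) \<ge> n)"

end

theory Submission
  imports Defs
begin

(* Let q = (1 - 2 eps) p / (1 - eps), so that (1 - 2 eps) rho <= q <= p and p - q >= eps max(rho, p).
   Extend a canonical copy (v_1, ..., v_h) greedily through X_0 = X, X_j = X_(j-1) \<inter> N(v_j): if
   every v_j has at least q |X_(j-1)| neighbours in X_(j-1), then |X_h| >= q^h |X| and every vertex
   of X_h completes a canonical copy of K_(h+1).
   Since d_X(y) >= p |X|, a vertex y of Y with fewer than q |X'| neighbours in a large X' <= X is
   denser than (1 + eps rho^(2h)) p into X - X' (and there is no such y when X - X' is small).
   So if (b) fails, fewer than eps rho^(h^2) n vertices of Y are of low degree into X'. Classifying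
   the copies by the first j >= 2 at which the greedy extension fails, at most
   (h - 1) eps rho^(h^2) prod |V_i| copies are lost, and this loss is absorbed by lowering the
   density from (1 - eps) rho to (1 - 2 eps) rho. *)

lemma deg_in_le_card:
  assumes "finite A"
  shows "deg_in E A y \<le> card A"
  unfolding deg_in_def using assms by (intro card_mono) auto

lemma deg_in_Diff:
  assumes "finite X" "X' \<subseteq> X"
  shows "deg_in E X y = deg_in E X' y + deg_in E (X - X') y"
proof -
  have "{x \<in> X. E y x} = {x \<in> X'. E y x} \<union> {x \<in> X - X'. E y x}" using assms(2) by blast
  then show ?thesis
    unfolding deg_in_def using assms by (subst card_Un_disjoint[symmetric]) (auto intro: finite_subset)
qed

definition low_deg :: "('a \<Rightarrow> 'a \<Rightarrow> bool) \<Rightarrow> 'a set \<Rightarrow> 'a set \<Rightarrow> real \<Rightarrow> 'a set" where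
  "low_deg E Y A q = {y \<in> Y. real (deg_in E A y) < q * real (card A)}"

lemma low_deg_empty:
  fixes p q :: real
  assumes "finite X" "X' \<subseteq> X" "0 \<le> p"
    and deg: "\<forall>y\<in>Y. p * real (card X) \<le> real (deg_in E X y)"
    and small: "real (card (X - X')) \<le> (p - q) * real (card X')"
  shows "low_deg E Y X' q = {}"
proof -
  have "q * real (card X') \<le> real (deg_in E X' y)" if "y \<in> Y" for y
  proof -
    have "deg_in E X y \<le> deg_in E X' y + card (X - X')"
      using deg_in_Diff[OF assms(1,2)] deg_in_le_card[of "X - X'"] assms(1) by simp
    then have "real (deg_in E X y) \<le> real (deg_in E X' y) + real (card (X - X'))"
      by (simp flip: of_nat_add)
    then have "p * real (card X) \<le> real (deg_in E X' y) + real (card (X - X'))"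
      using deg that by fastforce
    moreover have "p * real (card X') \<le> p * real (card X)"
      using assms by (intro mult_left_mono) (auto intro: card_mono)
    ultimately show ?thesis using small by (simp add: algebra_simps)
  qed
  then show ?thesis unfolding low_deg_def by (auto simp: not_less[symmetric])
qed

lemma low_deg_subset:
  fixes p q \<delta> :: real
  assumes "finite X" "X' \<subseteq> X"
    and deg: "\<forall>y\<in>Y. p * real (card X) \<le> real (deg_in E X y)"
    and gap: "\<delta> * p * real (card (X - X')) \<le> (p - q) * real (card X')"
  shows "low_deg E Y X' q
    \<subseteq> {y \<in> Y. (1 + \<delta>) * p * real (card (X - X')) \<le> real (deg_in E (X - X') y)}"
proof
  fix y assume y: "y \<in> low_deg E Y X' q"
  have "p * real (card X) \<le> real (deg_in E X' y) + real (deg_in E (X - X') y)"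
    using deg y deg_in_Diff[OF assms(1,2)] unfolding low_deg_def by fastforce
  moreover have "real (card X) = real (card X') + real (card (X - X'))"
    using assms(1,2) by (simp add: card_Diff_subset card_mono finite_subset of_nat_diff)
  ultimately show "y \<in> {y \<in> Y. (1 + \<delta>) * p * real (card (X - X')) \<le> real (deg_in E (X - X') y)}"
    using y gap unfolding low_deg_def by (simp add: algebra_simps)
qed

lemma card_low_deg_lt:
  fixes p q \<delta> \<theta> m :: real
  assumes "finite X" "finite Y" "X' \<subseteq> X" "0 \<le> p" "0 < m"
    and deg: "\<forall>y\<in>Y. p * real (card X) \<le> real (deg_in E X y)"
    and gap: "\<theta> * real (card X) \<le> (p - q) * real (card X')"
      "\<delta> * p * real (card (X - X')) \<le> (p - q) * real (card X')"
    and sparse: "\<And>Z Y'. Z \<subseteq> X \<Longrightarrow> Y' \<subseteq> Y \<Longrightarrow> \<theta> * real (card X) \<le> real (card Z) \<Longrightarrow>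
      \<forall>y\<in>Y'. (1 + \<delta>) * p * real (card Z) \<le> real (deg_in E Z y) \<Longrightarrow> real (card Y') < m"
  shows "real (card (low_deg E Y X' q)) < m"
proof (cases "\<theta> * real (card X) \<le> real (card (X - X'))")
  case True
  let ?D = "{y \<in> Y. (1 + \<delta>) * p * real (card (X - X')) \<le> real (deg_in E (X - X') y)}"
  have "card (low_deg E Y X' q) \<le> card ?D"
    using low_deg_subset[OF assms(1,3) deg gap(2)] assms(2) by (intro card_mono) auto
  moreover have "real (card ?D) < m" using True by (intro sparse) auto
  ultimately show ?thesis by linarith
next
  case False
  then have "low_deg E Y X' q = {}" using gap(1) by (intro low_deg_empty[OF assms(1,3,4) deg]) simp
  then show ?thesis using \<open>0 < m\<close> by simp
qed

(* With v_i = K (i - 1), the set common_nbhd E X K j is the X_j of the greedy extension. *)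
definition common_nbhd :: "('a \<Rightarrow> 'a \<Rightarrow> bool) \<Rightarrow> 'a set \<Rightarrow> (nat \<Rightarrow> 'a) \<Rightarrow> nat \<Rightarrow> 'a set" where
  "common_nbhd E X K j = {x \<in> X. \<forall>i<j. E (K i) x}"

lemma common_nbhd_0 [simp]: "common_nbhd E X K 0 = X"
  by (simp add: common_nbhd_def)

lemma common_nbhd_subset: "common_nbhd E X K j \<subseteq> X"
  by (auto simp: common_nbhd_def)

lemma card_common_nbhd_Suc:
  "card (common_nbhd E X K (Suc j)) = deg_in E (common_nbhd E X K j) (K j)"
proof -
  have "common_nbhd E X K (Suc j) = {x \<in> common_nbhd E X K j. E (K j) x}"
    by (auto simp: common_nbhd_def less_Suc_eq)
  then show ?thesis by (simp add: deg_in_def)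
qed

lemma common_nbhd_fun_upd: "j \<le> i \<Longrightarrow> common_nbhd E X (K(i := v)) j = common_nbhd E X K j"
  by (auto simp: common_nbhd_def)

lemma card_common_nbhd_ge_power:
  fixes q :: real
  assumes "0 \<le> q"
    and "\<forall>i<j. q * real (card (common_nbhd E X K i)) \<le> real (deg_in E (common_nbhd E X K i) (K i))"
  shows "q ^ j * real (card X) \<le> real (card (common_nbhd E X K j))"
  using assms(2)
proof (induction j)
  case 0
  show ?case by simp
next
  case (Suc j)
  have "q ^ Suc j * real (card X) \<le> q * real (card (common_nbhd E X K j))"
    using Suc assms(1) by (simp add: mult.assoc mult_left_mono)
  also have "\<dots> \<le> real (card (common_nbhd E X K (Suc j)))"
    using Suc.prems by (simp add: card_common_nbhd_Suc)
  finally show ?case .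
qed

lemma card_PiE_fibres_le:
  fixes c :: real
  assumes "finite I" "\<forall>i\<in>I. finite (Vs i)" "B \<subseteq> Pi\<^sub>E I Vs"
    and F: "\<And>t. finite (F t)" "\<And>t. real (card (F t)) \<le> c"
    and fibre: "\<And>K. K \<in> B \<Longrightarrow> K j \<in> F (K(j := undefined))"
  shows "real (card B) \<le> c * (\<Prod>i\<in>I - {j}. real (card (Vs i)))"
proof -
  define T where "T = Pi\<^sub>E (I - {j}) Vs"
  have finT: "finite T" unfolding T_def using assms(1,2) by (intro finite_PiE) auto
  have "card B \<le> card (Sigma T F)"
  proof (rule card_inj_on_le)
    show "inj_on (\<lambda>K. (K(j := undefined), K j)) B"
      by (rule inj_onI) (metis fun_upd_triv fun_upd_upd prod.inject)
    show "(\<lambda>K. (K(j := undefined), K j)) ` B \<subseteq> Sigma T F"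
      using assms(3) fibre by (fastforce simp: T_def PiE_iff extensional_def)
    show "finite (Sigma T F)" using finT F(1) by blast
  qed
  also have "\<dots> = (\<Sum>t\<in>T. card (F t))" using finT F(1) by simp
  finally have "real (card B) \<le> (\<Sum>t\<in>T. real (card (F t)))" by (simp flip: of_nat_sum)
  also have "\<dots> \<le> real (card T) * c" using F(2) by (rule sum_bounded_above)
  also have "card T = (\<Prod>i\<in>I - {j}. card (Vs i))" unfolding T_def using assms(1) by (simp add: card_PiE)
  finally show ?thesis by (simp add: mult.commute)
qed

lemma finite_canonical_copies:
  "\<forall>i<h. finite (Vs i) \<Longrightarrow> finite (canonical_copies E h Vs)"
  unfolding canonical_copies_def by (rule finite_subset[of _ "Pi\<^sub>E {..<h} Vs"]) (auto intro: finite_PiE)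

lemma canonical_copies_fun_upd:
  assumes sym: "symp E"
    and K: "K \<in> canonical_copies E h Vs" and x: "x \<in> common_nbhd E X K h"
  shows "K(h := x) \<in> canonical_copies E (h + 1) (Vs(h := X))"
proof -
  have "K \<in> Pi\<^sub>E {..<h} Vs" and "\<And>i j. i < h \<Longrightarrow> j < h \<Longrightarrow> i \<noteq> j \<Longrightarrow> E (K i) (K j)"
    using K by (auto simp: canonical_copies_def)
  moreover have "x \<in> X" and "\<And>i. i < h \<Longrightarrow> E (K i) x"
    using x by (auto simp: common_nbhd_def)
  ultimately show ?thesis
    unfolding canonical_copies_def using sym
    by (auto simp: PiE_iff extensional_def less_Suc_eq dest: sympD)
qed

lemma sum_card_common_nbhd_le:
  assumes sym: "symp E"
    and fin: "\<forall>i<h. finite (Vs i)" "finite X" and G: "G \<subseteq> canonical_copies E h Vs"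
  shows "(\<Sum>K\<in>G. card (common_nbhd E X K h)) \<le> card (canonical_copies E (h + 1) (Vs(h := X)))"
proof -
  have finG: "finite G" using finite_canonical_copies[OF fin(1)] G by (rule rev_finite_subset)
  have "(\<Sum>K\<in>G. card (common_nbhd E X K h)) = card (SIGMA K:G. common_nbhd E X K h)"
    using finG fin(2) by (intro card_SigmaI[symmetric]) (auto intro: finite_subset[OF common_nbhd_subset])
  also have "\<dots> \<le> card (canonical_copies E (h + 1) (Vs(h := X)))"
  proof (rule card_inj_on_le)
    have "K h = undefined" if "K \<in> G" for K
      using that G by (auto simp: canonical_copies_def intro: PiE_arb)
    then show "inj_on (\<lambda>(K, x). K(h := x)) (SIGMA K:G. common_nbhd E X K h)"
      by (auto simp: inj_on_def fun_eq_iff) metis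
    show "(\<lambda>(K, x). K(h := x)) ` (SIGMA K:G. common_nbhd E X K h) \<subseteq> canonical_copies E (h + 1) (Vs(h := X))"
      using G canonical_copies_fun_upd[OF sym] by auto
    show "finite (canonical_copies E (h + 1) (Vs(h := X)))"
      using fin by (intro finite_canonical_copies) (auto simp: less_Suc_eq)
  qed
  finally show ?thesis .
qed

definition low_at :: "('a \<Rightarrow> 'a \<Rightarrow> bool) \<Rightarrow> (nat \<Rightarrow> 'a set) \<Rightarrow> 'a set \<Rightarrow> real \<Rightarrow> (nat \<Rightarrow> 'a) \<Rightarrow> nat \<Rightarrow> bool" where
  "low_at E Vs X q K j \<longleftrightarrow> K j \<in> low_deg E (Vs j) (common_nbhd E X K j) q"

lemma card_common_nbhd_ge_power_if_not_low_at:
  fixes q :: real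
  assumes "0 \<le> q" "K \<in> Pi\<^sub>E {..<h} Vs" "j \<le> h" "\<forall>i<j. \<not> low_at E Vs X q K i"
  shows "q ^ j * real (card X) \<le> real (card (common_nbhd E X K j))"
  using assms by (intro card_common_nbhd_ge_power) (auto simp: low_at_def low_deg_def not_less)

lemma card_first_low_at_le:
  fixes q L c :: real
  assumes fin: "\<forall>i<h. finite (Vs i)" and "0 \<le> q" "0 \<le> c" "j < h"
    and L: "L \<le> q ^ j * real (card X)"
    and few: "\<And>X'. X' \<subseteq> X \<Longrightarrow> L \<le> real (card X') \<Longrightarrow> real (card (low_deg E (Vs j) X' q)) \<le> c"
  shows "real (card {K \<in> canonical_copies E h Vs. low_at E Vs X q K j \<and> (\<forall>i<j. \<not> low_at E Vs X q K i)})
    \<le> c * (\<Prod>i\<in>{..<h} - {j}. real (card (Vs i)))"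
proof -
  define F where "F t = (if L \<le> real (card (common_nbhd E X t j))
    then low_deg E (Vs j) (common_nbhd E X t j) q else {})" for t
  have "K j \<in> F (K(j := undefined))"
    if "K \<in> canonical_copies E h Vs" "low_at E Vs X q K j" "\<forall>i<j. \<not> low_at E Vs X q K i" for K
  proof -
    have "K \<in> Pi\<^sub>E {..<h} Vs" using that(1) by (simp add: canonical_copies_def)
    then have "L \<le> real (card (common_nbhd E X K j))"
      using L card_common_nbhd_ge_power_if_not_low_at[OF \<open>0 \<le> q\<close> _ less_imp_le[OF \<open>j < h\<close>] that(3)]
      by linarith
    then show ?thesis using that(2) by (simp add: F_def common_nbhd_fun_upd low_at_def)
  qed
  moreover have "finite (F t)" "real (card (F t)) \<le> c" for t
    using fin \<open>j < h\<close> few[OF common_nbhd_subset] \<open>0 \<le> c\<close> by (auto simp: F_def low_deg_def)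
  ultimately show ?thesis
    using fin by (intro card_PiE_fibres_le[where F = F]) (auto simp: canonical_copies_def)
qed

lemma card_canonical_copies_le_by_first_low_at:
  assumes fin: "\<forall>i<h. finite (Vs i)" and low0: "low_deg E (Vs 0) X q = {}"
  shows "card (canonical_copies E h Vs)
    \<le> card {K \<in> canonical_copies E h Vs. \<forall>i<h. \<not> low_at E Vs X q K i}
      + (\<Sum>j\<in>{1..<h}. card {K \<in> canonical_copies E h Vs.
          low_at E Vs X q K j \<and> (\<forall>i<j. \<not> low_at E Vs X q K i)})"
proof -
  define S where "S = canonical_copies E h Vs"
  define good where "good = {K \<in> S. \<forall>i<h. \<not> low_at E Vs X q K i}"
  define bad where "bad j = {K \<in> S. low_at E Vs X q K j \<and> (\<forall>i<j. \<not> low_at E Vs X q K i)}" for j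
  have "S \<subseteq> good \<union> (\<Union>j\<in>{1..<h}. bad j)"
  proof
    fix K assume K: "K \<in> S"
    show "K \<in> good \<union> (\<Union>j\<in>{1..<h}. bad j)"
    proof (cases "K \<in> good")
      case False
      then obtain j where j: "j < h" "low_at E Vs X q K j" and first: "\<forall>i<j. \<not> low_at E Vs X q K i"
        using K exists_least_iff[of "\<lambda>j. j < h \<and> low_at E Vs X q K j"] unfolding good_def by auto
      have "j \<noteq> 0" using j(2) low0 by (metis common_nbhd_0 empty_iff low_at_def)
      then show ?thesis using K j first unfolding bad_def by auto
    qed simp
  qed
  moreover have "finite S" unfolding S_def using fin by (rule finite_canonical_copies)
  ultimately have "card S \<le> card (good \<union> (\<Union>j\<in>{1..<h}. bad j))"
    by (intro card_mono) (auto simp: good_def bad_def)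
  also have "\<dots> \<le> card good + (\<Sum>j\<in>{1..<h}. card (bad j))"
    using card_Un_le card_UN_le[of "{1..<h}" bad] by (meson add_left_mono finite_atLeastLessThan le_trans)
  finally show ?thesis unfolding S_def good_def bad_def .
qed

lemma card_copies_extension_ge:
  fixes q L \<theta> :: real
  assumes sym: "symp E" and fin: "\<forall>i<h. finite (Vs i)" "finite X"
    and "0 \<le> q" "0 \<le> \<theta>"
    and L: "\<And>j. j < h \<Longrightarrow> L \<le> q ^ j * real (card X)"
    and low0: "low_deg E (Vs 0) X q = {}"
    and few: "\<And>j X'. j < h \<Longrightarrow> X' \<subseteq> X \<Longrightarrow> L \<le> real (card X') \<Longrightarrow>
      real (card (low_deg E (Vs j) X' q)) \<le> \<theta> * real (card (Vs j))"
  shows "(real (card (canonical_copies E h Vs)) - real (h - 1) * \<theta> * (\<Prod>i<h. real (card (Vs i))))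
      * (q ^ h * real (card X))
    \<le> real (card (canonical_copies E (h + 1) (Vs(h := X))))"
proof -
  define S where "S = canonical_copies E h Vs"
  define PP where "PP = (\<Prod>i<h. real (card (Vs i)))"
  define good where "good = {K \<in> S. \<forall>i<h. \<not> low_at E Vs X q K i}"
  define bad where "bad j = {K \<in> S. low_at E Vs X q K j \<and> (\<forall>i<j. \<not> low_at E Vs X q K i)}" for j
  have "real (card (bad j)) \<le> \<theta> * PP" if "j < h" for j
  proof -
    have "real (card (bad j)) \<le> \<theta> * real (card (Vs j)) * (\<Prod>i\<in>{..<h} - {j}. real (card (Vs i)))"
      unfolding bad_def S_def using fin(1) \<open>0 \<le> q\<close> \<open>0 \<le> \<theta>\<close> that L[OF that] few[OF that]
      by (intro card_first_low_at_le) auto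
    also have "\<dots> = \<theta> * PP" using that by (simp add: PP_def prod.remove mult.assoc)
    finally show ?thesis .
  qed
  then have "(\<Sum>j\<in>{1..<h}. real (card (bad j))) \<le> real (h - 1) * \<theta> * PP"
    using sum_mono[of "{1..<h}" "\<lambda>j. real (card (bad j))" "\<lambda>_. \<theta> * PP"] by simp
  moreover have "real (card S) \<le> real (card good) + (\<Sum>j\<in>{1..<h}. real (card (bad j)))"
    using card_canonical_copies_le_by_first_low_at[OF fin(1) low0] unfolding S_def good_def bad_def
    by (simp flip: of_nat_sum of_nat_add)
  ultimately have "(real (card S) - real (h - 1) * \<theta> * PP) * (q ^ h * real (card X))
      \<le> (\<Sum>K\<in>good. q ^ h * real (card X))"
    using \<open>0 \<le> q\<close> by (simp add: mult_right_mono)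
  also have "\<dots> \<le> (\<Sum>K\<in>good. real (card (common_nbhd E X K h)))"
    using \<open>0 \<le> q\<close> by (intro sum_mono card_common_nbhd_ge_power_if_not_low_at[where Vs = Vs and h = h])
      (auto simp: good_def S_def canonical_copies_def)
  also have "\<dots> \<le> real (card (canonical_copies E (h + 1) (Vs(h := X))))"
    using sum_card_common_nbhd_le[OF sym fin, of good] unfolding good_def S_def
    by (simp flip: of_nat_sum)
  finally show ?thesis unfolding S_def PP_def .
qed

lemma choose_two_double: "2 * (h choose 2) + h = h ^ 2"
  by (induction h) (simp_all add: numeral_2_eq_2 power2_eq_square)

lemma power_choose_two_diff_ge:
  fixes \<epsilon> \<rho> :: real
  assumes "0 \<le> \<epsilon>" "\<epsilon> \<le> 1/2" "0 \<le> \<rho>" "\<rho> \<le> 1/2"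
  shows "((1 - 2*\<epsilon>) * \<rho>) ^ (h choose 2) + real (h - 1) * (\<epsilon> * \<rho> ^ h\<^sup>2) \<le> ((1 - \<epsilon>) * \<rho>) ^ (h choose 2)"
proof (cases "h \<le> 1")
  case True
  then have "h choose 2 = 0" "h - 1 = 0" by (simp_all add: binomial_eq_0)
  then show ?thesis by (simp only:) simp
next
  case False
  then have "h choose 2 \<noteq> 0" by simp
  then obtain m where m: "h choose 2 = Suc m" using not0_implies_Suc by blast
  then have hsq: "h\<^sup>2 = (2*m + 1) + (h + 1)" using choose_two_double[of h] by simp
  define a b where "a = (1 - \<epsilon>) * \<rho>" and "b = (1 - 2*\<epsilon>) * \<rho>"
  have "0 \<le> b" using assms by (simp add: b_def)
  have "b \<le> a" "\<rho> * \<rho> \<le> a" using assms by (simp_all add: a_def b_def mult_right_mono)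
  have "b ^ Suc m \<le> b * a ^ m"
    using \<open>0 \<le> b\<close> \<open>b \<le> a\<close> by (simp add: mult_left_mono power_mono)
  moreover have "\<rho> ^ (2*m) * (\<epsilon> * \<rho>) \<le> a ^ m * (a - b)"
  proof -
    have "\<rho> ^ (2*m) \<le> a ^ m"
      unfolding power_mult power2_eq_square using \<open>\<rho> * \<rho> \<le> a\<close> assms(3) by (simp add: power_mono)
    moreover have "a - b = \<epsilon> * \<rho>" by (simp add: a_def b_def algebra_simps)
    ultimately show ?thesis using assms by (simp add: mult_right_mono)
  qed
  moreover have "real (h - 1) * (\<epsilon> * \<rho> ^ h\<^sup>2) \<le> \<rho> ^ (2*m) * (\<epsilon> * \<rho>)"
  proof -
    have "h - 1 \<le> 2 ^ (h + 1)" using less_exp[of "h + 1"] by linarith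
    then have "real (h - 1) \<le> 2 ^ (h + 1)" by (metis of_nat_le_iff of_nat_numeral of_nat_power)
    moreover have "\<rho> ^ (h + 1) \<le> (1/2) ^ (h + 1)" using assms by (intro power_mono) auto
    ultimately have "real (h - 1) * \<rho> ^ (h + 1) \<le> 2 ^ (h + 1) * (1/2) ^ (h + 1)"
      using assms by (intro mult_mono) auto
    then have "real (h - 1) * \<rho> ^ (h + 1) \<le> 1" by (simp add: power_one_over)
    moreover have "real (h - 1) * (\<epsilon> * \<rho> ^ h\<^sup>2) = (\<rho> ^ (2*m) * (\<epsilon> * \<rho>)) * (real (h - 1) * \<rho> ^ (h + 1))"
      unfolding hsq power_add by simp
    moreover have "0 \<le> \<rho> ^ (2*m) * (\<epsilon> * \<rho>)" using assms by simp
    ultimately show ?thesis by (simp only: mult_left_le)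
  qed
  moreover have "a ^ m * (a - b) = a ^ Suc m - b * a ^ m" by (simp add: algebra_simps)
  ultimately show ?thesis unfolding m a_def[symmetric] b_def[symmetric] by linarith
qed

lemma rich_density_step:
  fixes \<epsilon> \<rho> q s P x :: real
  assumes "0 \<le> \<epsilon>" "\<epsilon> \<le> 1/2" "0 \<le> \<rho>" "\<rho> \<le> 1/2" "0 \<le> P" "0 \<le> x"
    and s: "((1 - \<epsilon>) * \<rho>) ^ (h choose 2) * P \<le> s" and q: "(1 - 2*\<epsilon>) * \<rho> \<le> q"
  shows "((1 - 2*\<epsilon>) * \<rho>) ^ (h + 1 choose 2) * (P * x)
    \<le> (s - real (h - 1) * (\<epsilon> * \<rho> ^ h\<^sup>2) * P) * (q ^ h * x)"
proof -
  define b where "b = (1 - 2*\<epsilon>) * \<rho>"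
  have "0 \<le> b" using assms by (simp add: b_def)
  have "(b ^ (h choose 2) + real (h - 1) * (\<epsilon> * \<rho> ^ h\<^sup>2)) * P \<le> ((1 - \<epsilon>) * \<rho>) ^ (h choose 2) * P"
    using power_choose_two_diff_ge[OF assms(1-4)] \<open>0 \<le> P\<close> unfolding b_def by (rule mult_right_mono)
  then have s': "b ^ (h choose 2) * P \<le> s - real (h - 1) * (\<epsilon> * \<rho> ^ h\<^sup>2) * P"
    using s by (simp add: distrib_right)
  have "b ^ h * x \<le> q ^ h * x"
    using \<open>0 \<le> b\<close> q \<open>0 \<le> x\<close> unfolding b_def by (intro mult_right_mono power_mono) auto
  then have "(b ^ (h choose 2) * P) * (b ^ h * x) \<le> (s - real (h - 1) * (\<epsilon> * \<rho> ^ h\<^sup>2) * P) * (q ^ h * x)"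
  proof (rule mult_mono[OF s'])
    show "0 \<le> s - real (h - 1) * (\<epsilon> * \<rho> ^ h\<^sup>2) * P"
      using s' \<open>0 \<le> b\<close> \<open>0 \<le> P\<close> by (meson order_trans zero_le_mult_iff zero_le_power)
  qed (use \<open>0 \<le> b\<close> \<open>0 \<le> x\<close> in simp_all)
  moreover have "h + 1 choose 2 = (h choose 2) + h" by (simp add: numeral_2_eq_2)
  ultimately show ?thesis unfolding b_def[symmetric] by (simp add: power_add ac_simps)
qed

lemma extension_rate_bounds:
  fixes \<epsilon> \<rho> p :: real
  assumes "0 < \<epsilon>" "\<epsilon> \<le> 1/2" "0 < \<rho>" "(1 - \<epsilon>) * \<rho> \<le> p"
  defines "q \<equiv> (1 - 2*\<epsilon>) / (1 - \<epsilon>) * p"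
  shows "0 < p" "(1 - 2*\<epsilon>) * \<rho> \<le> q" "q \<le> p" "\<epsilon> * \<rho> \<le> p - q" "\<epsilon> * p \<le> p - q"
proof -
  have "0 < (1 - \<epsilon>) * \<rho>" using assms by simp
  then show "0 < p" using assms(4) by linarith
  have pq: "p - q = \<epsilon> / (1 - \<epsilon>) * p" using assms(1,2) by (simp add: q_def field_simps)
  have "(1 - 2*\<epsilon>) * \<rho> = (1 - 2*\<epsilon>) / (1 - \<epsilon>) * ((1 - \<epsilon>) * \<rho>)" using assms by simp
  also have "\<dots> \<le> q" unfolding q_def using assms by (intro mult_left_mono) auto
  finally show "(1 - 2*\<epsilon>) * \<rho> \<le> q" .
  have "\<epsilon> * \<rho> = \<epsilon> / (1 - \<epsilon>) * ((1 - \<epsilon>) * \<rho>)" using assms by simp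
  also have "\<dots> \<le> p - q" unfolding pq using assms by (intro mult_left_mono) auto
  finally show "\<epsilon> * \<rho> \<le> p - q" .
  have "\<epsilon> * p * (1 - \<epsilon>) \<le> \<epsilon> * p" using assms \<open>0 < p\<close> by (simp add: mult_left_le)
  then show "\<epsilon> * p \<le> p - q" unfolding pq using assms(1,2) by (simp add: field_simps)
  moreover have "0 < \<epsilon> * p" using assms(1) \<open>0 < p\<close> by simp
  ultimately show "q \<le> p" by linarith
qed

lemma rho_power_bounds:
  fixes \<epsilon> \<rho> :: real
  assumes "0 \<le> \<epsilon>" "0 \<le> \<rho>" "\<rho> \<le> 1 - 2*\<epsilon>" "1 \<le> h"
  shows "\<rho> ^ h\<^sup>2 \<le> \<rho> * ((1 - 2*\<epsilon>) * \<rho>) ^ (h - 1)" "\<rho> ^ (2*h) \<le> ((1 - 2*\<epsilon>) * \<rho>) ^ (h - 1)"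
proof -
  have rb: "\<rho> ^ (2 * (h - 1)) \<le> ((1 - 2*\<epsilon>) * \<rho>) ^ (h - 1)"
    unfolding power_mult power2_eq_square using assms by (intro power_mono mult_right_mono) auto
  have "1 + 2 * (h - 1) \<le> h\<^sup>2" using \<open>1 \<le> h\<close> by (cases h) (auto simp: power2_eq_square)
  then have "\<rho> ^ h\<^sup>2 \<le> \<rho> * \<rho> ^ (2 * (h - 1))" "\<rho> ^ (2*h) \<le> \<rho> ^ (2 * (h - 1))"
    using assms by (auto simp flip: power_Suc intro: power_decreasing)
  then show "\<rho> ^ h\<^sup>2 \<le> \<rho> * ((1 - 2*\<epsilon>) * \<rho>) ^ (h - 1)" "\<rho> ^ (2*h) \<le> ((1 - 2*\<epsilon>) * \<rho>) ^ (h - 1)"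
    using rb \<open>0 \<le> \<rho>\<close> by (meson order_trans mult_left_mono)+
qed

lemma card_low_deg_lt_if_sparse:
  fixes \<epsilon> \<rho> p m :: real
  assumes eps: "0 < \<epsilon>" "\<epsilon> \<le> 1/4" and rho: "0 < \<rho>" "\<rho> \<le> 1/2"
    and p: "(1 - \<epsilon>) * \<rho> \<le> p" and "1 \<le> h"
    and "finite X" "finite Y" "X' \<subseteq> X" "0 < m"
    and deg: "\<forall>y\<in>Y. p * real (card X) \<le> real (deg_in E X y)"
    and sparse: "\<And>Z Y'. Z \<subseteq> X \<Longrightarrow> Y' \<subseteq> Y \<Longrightarrow> \<epsilon> * \<rho> ^ h\<^sup>2 * real (card X) \<le> real (card Z) \<Longrightarrow>
      \<forall>y\<in>Y'. (1 + \<epsilon> * \<rho> ^ (2*h)) * p * real (card Z) \<le> real (deg_in E Z y) \<Longrightarrow> real (card Y') < m"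
    and X': "((1 - 2*\<epsilon>) * \<rho>) ^ (h - 1) * real (card X) \<le> real (card X')"
  shows "real (card (low_deg E Y X' ((1 - 2*\<epsilon>) / (1 - \<epsilon>) * p))) < m"
proof (rule card_low_deg_lt[OF assms(7-9) _ assms(10) deg _ _ sparse])
  define q where "q = (1 - 2*\<epsilon>) / (1 - \<epsilon>) * p"
  define B where "B = ((1 - 2*\<epsilon>) * \<rho>) ^ (h - 1) * real (card X)"
  have rate: "0 < p" "q \<le> p" "\<epsilon> * \<rho> \<le> p - q" "\<epsilon> * p \<le> p - q"
    using extension_rate_bounds[OF eps(1) _ rho(1) p] eps unfolding q_def by simp_all
  then show "0 \<le> p" by simp
  have rho_pow: "\<rho> ^ h\<^sup>2 \<le> \<rho> * ((1 - 2*\<epsilon>) * \<rho>) ^ (h - 1)" "\<rho> ^ (2*h) \<le> ((1 - 2*\<epsilon>) * \<rho>) ^ (h - 1)"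
    using rho_power_bounds[of \<epsilon> \<rho> h] eps rho \<open>1 \<le> h\<close> by simp_all
  have "0 \<le> B" using eps rho by (simp add: B_def)
  have "(p - q) * B \<le> (p - q) * real (card X')"
    using X' rate(2) unfolding B_def by (intro mult_left_mono) auto
  moreover have "\<epsilon> * \<rho> ^ h\<^sup>2 * real (card X) \<le> (\<epsilon> * \<rho>) * B"
    using mult_left_mono[OF mult_right_mono[OF rho_pow(1)], of "real (card X)" \<epsilon>] eps
    unfolding B_def by (simp add: ac_simps)
  moreover have "\<epsilon> * \<rho> ^ (2*h) * p * real (card (X - X')) \<le> (\<epsilon> * p) * B"
    using rho_pow(2) eps rho \<open>0 < p\<close> card_mono[OF \<open>finite X\<close> Diff_subset]
    unfolding B_def by (simp add: mult_mono mult.assoc mult.left_commute)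
  moreover have "(\<epsilon> * \<rho>) * B \<le> (p - q) * B" "(\<epsilon> * p) * B \<le> (p - q) * B"
    using rate \<open>0 \<le> B\<close> by (simp_all add: mult_right_mono)
  ultimately show "\<epsilon> * \<rho> ^ h\<^sup>2 * real (card X) \<le> (p - q) * real (card X')"
    "\<epsilon> * \<rho> ^ (2*h) * p * real (card (X - X')) \<le> (p - q) * real (card X')"
    by linarith+
qed

lemma rich_inflation_fun_upd:
  assumes rich: "rich_inflation V E h Vs \<rho> \<epsilon> n" and "1 \<le> h" "X \<subseteq> V"
    and disj: "X \<inter> (\<Union>i<h. Vs i) = {}" and "n \<le> card X"
    and copies: "((1 - \<epsilon>') * \<rho>) ^ (h + 1 choose 2) * ((\<Prod>i<h. real (card (Vs i))) * real (card X))
      \<le> real (card (canonical_copies E (h + 1) (Vs(h := X))))"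
  shows "rich_inflation V E (h + 1) (Vs(h := X)) \<rho> \<epsilon>' n"
proof -
  have "(\<Prod>i<h + 1. real (card ((Vs(h := X)) i))) = (\<Prod>i<h. real (card (Vs i))) * real (card X)"
    by simp
  then show ?thesis
    using assms unfolding rich_inflation_def by (auto simp: less_Suc_eq)
qed

lemma rich_inflation_extend:
  fixes \<epsilon> \<rho> q :: real
  assumes G: "graph V E" and rich: "rich_inflation V E h Vs \<rho> \<epsilon> n" and h: "1 \<le> h"
    and X: "X \<subseteq> V" "X \<inter> (\<Union>i<h. Vs i) = {}" "n \<le> card X"
    and eps: "0 \<le> \<epsilon>" "\<epsilon> \<le> 1/2" and rho: "0 \<le> \<rho>" "\<rho> \<le> 1/2" and q: "(1 - 2*\<epsilon>) * \<rho> \<le> q"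
    and low0: "low_deg E (Vs 0) X q = {}"
    and few: "\<And>X'. X' \<subseteq> X \<Longrightarrow> ((1 - 2*\<epsilon>) * \<rho>) ^ (h - 1) * real (card X) \<le> real (card X') \<Longrightarrow>
      real (card (low_deg E (\<Union>i<h. Vs i) X' q)) \<le> \<epsilon> * \<rho> ^ h\<^sup>2 * real n"
  shows "rich_inflation V E (h + 1) (Vs(h := X)) \<rho> (2 * \<epsilon>) n"
proof -
  define b where "b = (1 - 2*\<epsilon>) * \<rho>"
  define PP where "PP = (\<Prod>i<h. real (card (Vs i)))"
  have "symp E" "finite V" using G by (auto simp: graph_def symp_def)
  have Vs: "\<forall>i<h. Vs i \<subseteq> V" "\<forall>i<h. n \<le> card (Vs i)"
    and copies: "((1 - \<epsilon>) * \<rho>) ^ (h choose 2) * PP \<le> real (card (canonical_copies E h Vs))"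
    using rich unfolding rich_inflation_def PP_def by auto
  then have fin: "\<forall>i<h. finite (Vs i)" "finite X" using X(1) \<open>finite V\<close> by (auto intro: finite_subset)
  have few_j: "real (card (low_deg E (Vs j) X' q)) \<le> \<epsilon> * \<rho> ^ h\<^sup>2 * real (card (Vs j))"
    if "j < h" "X' \<subseteq> X" "b ^ (h - 1) * real (card X) \<le> real (card X')" for j X'
  proof -
    have "card (low_deg E (Vs j) X' q) \<le> card (low_deg E (\<Union>i<h. Vs i) X' q)"
      using that(1) fin(1) by (intro card_mono) (auto simp: low_deg_def)
    moreover have "\<epsilon> * \<rho> ^ h\<^sup>2 * real n \<le> \<epsilon> * \<rho> ^ h\<^sup>2 * real (card (Vs j))"
      using Vs(2) that(1) eps rho by (intro mult_left_mono) auto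
    ultimately show ?thesis using few[OF that(2)] that(3) unfolding b_def by linarith
  qed
  have "0 \<le> b" "b \<le> 1" using eps rho by (simp_all add: b_def mult_le_one)
  have "0 \<le> q" using \<open>0 \<le> b\<close> q unfolding b_def by linarith
  have "b ^ (h - 1) * real (card X) \<le> q ^ j * real (card X)" if "j < h" for j
  proof -
    have "b ^ (h - 1) \<le> b ^ j" using \<open>0 \<le> b\<close> \<open>b \<le> 1\<close> that by (intro power_decreasing) auto
    also have "\<dots> \<le> q ^ j" using q \<open>0 \<le> b\<close> unfolding b_def by (rule power_mono)
    finally show ?thesis by (simp add: mult_right_mono)
  qed
  then have "(real (card (canonical_copies E h Vs)) - real (h - 1) * (\<epsilon> * \<rho> ^ h\<^sup>2) * PP) * (q ^ h * real (card X))
      \<le> real (card (canonical_copies E (h + 1) (Vs(h := X))))"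
    unfolding PP_def using \<open>0 \<le> q\<close> eps rho
    by (intro card_copies_extension_ge[OF \<open>symp E\<close> fin _ _ _ low0 few_j]) simp_all
  moreover have "b ^ (h + 1 choose 2) * (PP * real (card X))
      \<le> (real (card (canonical_copies E h Vs)) - real (h - 1) * (\<epsilon> * \<rho> ^ h\<^sup>2) * PP) * (q ^ h * real (card X))"
    unfolding b_def using eps rho copies q by (intro rich_density_step) (simp_all add: PP_def prod_nonneg)
  ultimately show ?thesis
    using rich_inflation_fun_upd[OF rich h X] unfolding b_def PP_def by (simp add: mult.assoc)
qed

theorem lemma4p5:
  fixes V :: "'a set" and E :: "'a \<Rightarrow> 'a \<Rightarrow> bool"
    and h n :: nat and \<epsilon> \<rho> p :: real and Vs :: "nat \<Rightarrow> 'a set" and X :: "'a set"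
  assumes G: "graph V E"
    and h: "h \<ge> 1" and n: "n \<ge> 1"
    and eps: "0 < \<epsilon>" "\<epsilon> \<le> 1/9"
    and rho: "0 < \<rho>" "\<rho> \<le> 1/2"
    and rich: "rich_inflation V E h Vs \<rho> \<epsilon> n"
    and XV: "X \<subseteq> V"
    and disj: "X \<inter> (\<Union>i<h. Vs i) = {}"
    and Xn: "card X \<ge> n"
    and deg: "\<forall>y \<in> (\<Union>i<h. Vs i). real (deg_in E X y) \<ge> p * real (card X)"
    and p: "p \<ge> (1 - \<epsilon>) * \<rho>"
  shows "rich_inflation V E (h + 1) (Vs(h := X)) \<rho> (2 * \<epsilon>) n
     \<or> (\<exists>X' Y'. X' \<subseteq> X \<and> Y' \<subseteq> (\<Union>i<h. Vs i)
          \<and> real (card X') \<ge> \<epsilon> * \<rho> ^ (h^2) * real (card X)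
          \<and> real (card Y') \<ge> \<epsilon> * \<rho> ^ (h^2) * real n
          \<and> (\<forall>y \<in> Y'. real (deg_in E X' y) \<ge> (1 + \<epsilon> * \<rho> ^ (2*h)) * p * real (card X')))"
    (is "_ \<or> ?dense")
proof (rule disjCI)
  assume sparse: "\<not> ?dense"
  define q where "q = (1 - 2*\<epsilon>) / (1 - \<epsilon>) * p"
  have "finite V" using G by (simp add: graph_def)
  then have "finite X" "finite (\<Union>i<h. Vs i)"
    using rich XV by (auto simp: rich_inflation_def intro: finite_subset)
  have "0 < p" "(1 - 2*\<epsilon>) * \<rho> \<le> q" "q \<le> p"
    using extension_rate_bounds[OF eps(1) _ rho(1) p] eps unfolding q_def by simp_all
  show "rich_inflation V E (h + 1) (Vs(h := X)) \<rho> (2 * \<epsilon>) n"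
  proof (rule rich_inflation_extend[OF G rich h XV disj Xn])
    show "low_deg E (Vs 0) X q = {}"
      using \<open>finite X\<close> \<open>0 < p\<close> \<open>q \<le> p\<close> deg h by (intro low_deg_empty[where p = p]) auto
    fix X' assume X': "X' \<subseteq> X" "((1 - 2*\<epsilon>) * \<rho>) ^ (h - 1) * real (card X) \<le> real (card X')"
    have "real (card (low_deg E (\<Union>i<h. Vs i) X' q)) < \<epsilon> * \<rho> ^ h\<^sup>2 * real n"
      unfolding q_def
    proof (rule card_low_deg_lt_if_sparse[OF eps(1) _ rho p h \<open>finite X\<close> _ X'(1) _ deg _ X'(2)])
      fix Z Y' assume "Z \<subseteq> X" "Y' \<subseteq> (\<Union>i<h. Vs i)" "\<epsilon> * \<rho> ^ h\<^sup>2 * real (card X) \<le> real (card Z)"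
        "\<forall>y\<in>Y'. (1 + \<epsilon> * \<rho> ^ (2*h)) * p * real (card Z) \<le> real (deg_in E Z y)"
      then show "real (card Y') < \<epsilon> * \<rho> ^ h\<^sup>2 * real n" using sparse by (meson not_le)
    qed (use eps rho n \<open>finite (\<Union>i<h. Vs i)\<close> in auto)
    then show "real (card (low_deg E (\<Union>i<h. Vs i) X' q)) \<le> \<epsilon> * \<rho> ^ h\<^sup>2 * real n" by simp
  qed (use eps rho \<open>(1 - 2*\<epsilon>) * \<rho> \<le> q\<close> in auto)
qed

end
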